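(* Let $d\in\Lambda$ be a root ($d^2=-2$), $d^\perp$ its orthogonal complement in $\Lambda$, and $O^+(\Lambda)_d=\{g\in O^+(\Lambda):g(d)=d\}$. Then the restriction map $O^+(\Lambda)_d\ni g\mapsto g|_{d^\perp}\in O^+(d^\perp)$ is surjective.
   Context: $\Lambda=\mathbb U(2)\oplus\mathbb U\oplus\mathbb E_8(2)$ ($\mathbb U$ hyperbolic plane, $\mathbb E_8$ negative-definite, $(2)$ scaling). For a lattice $L$ of signature $(2,n)$, $\Omega_L$ is $\{[\omega]\in\mathbf P(L\otimes\mathbb C):\omega^2=0,\langle\omega,\bar\omega\rangle>0\}$, which has two components, and $O^+(L)$ is the index-2 subgroup of $O(L)$ preserving each component. The component $\Omega^+_{d^\perp}$ is chosen to be $\{\omega\in\Omega^+_\Lambda:\langle\omega,d\rangle=0\}$. *)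

theory Defs
  imports "HOL-Analysis.Analysis" "HOL-Library.Numeral_Type"
begin

text \<open>The lattice Lambda = U(2) + U + E8(2) is realised as int^12 with coordinates
  0,1 spanning U(2), 2,3 spanning U, and 4..11 the simple roots (Bourbaki order 1..8)
  of the negative definite E8, all scaled by 2. The form below is its Gram form, written
  over an arbitrary commutative ring (used for int and for the complexification).\<close>

definition symt :: "'a::comm_ring_1^12 \<Rightarrow> 'a^12 \<Rightarrow> 12 \<Rightarrow> 12 \<Rightarrow> 'a" where
  "symt x y i j = x$i * y$j + x$j * y$i"

definition lam_form :: "'a::comm_ring_1^12 \<Rightarrow> 'a^12 \<Rightarrow> 'a" where
  "lam_form x y =
     2 * symt x y 0 1
   + symt x y 2 3
   + 2 * ( - 2 * (x$4*y$4 + x$5*y$5 + x$6*y$6 + x$7*y$7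
                  + x$8*y$8 + x$9*y$9 + x$10*y$10 + x$11*y$11)
           + symt x y 4 6 + symt x y 6 7 + symt x y 7 8 + symt x y 8 9
           + symt x y 9 10 + symt x y 10 11 + symt x y 5 7)"

definition cvec :: "int^12 \<Rightarrow> complex^12" where
  "cvec x = (\<chi> i. complex_of_int (x$i))"

definition cconj :: "complex^12 \<Rightarrow> complex^12" where
  "cconj w = (\<chi> i. cnj (w$i))"

text \<open>Affine cone over the period domain Omega_Lambda (its connected components
  correspond bijectively to those of the projective Omega_Lambda).\<close>
definition Omega_Lam :: "(complex^12) set" where
  "Omega_Lam = {w. lam_form w w = 0 \<and> Re (lam_form w (cconj w)) > 0}"

definition dperp :: "int^12 \<Rightarrow> (int^12) set" where
  "dperp d = {x. lam_form x d = 0}"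

text \<open>Cone over Omega_{d-perp}: (d-perp) tensor C = {w. <w,d> = 0}.\<close>
definition Omega_dperp :: "int^12 \<Rightarrow> (complex^12) set" where
  "Omega_dperp d = {w \<in> Omega_Lam. lam_form w (cvec d) = 0}"

definition O_Lam :: "(int^12 \<Rightarrow> int^12) set" where
  "O_Lam = {g. bij g \<and> (\<forall>x y. g (x + y) = g x + g y)
              \<and> (\<forall>x y. lam_form (g x) (g y) = lam_form x y)}"

text \<open>O^+: the complexification (the complex matrix M extending g) preserves each
  connected component of Omega.\<close>
definition Oplus_Lam :: "(int^12 \<Rightarrow> int^12) set" where
  "Oplus_Lam = {g \<in> O_Lam. \<exists>M :: complex^12^12.
       (\<forall>x. M *v cvec x = cvec (g x))
     \<and> (\<forall>w \<in> Omega_Lam. connected_component Omega_Lam w (M *v w))}"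

definition O_dperp :: "int^12 \<Rightarrow> (int^12 \<Rightarrow> int^12) set" where
  "O_dperp d = {h. bij_betw h (dperp d) (dperp d)
              \<and> (\<forall>x\<in>dperp d. \<forall>y\<in>dperp d. h (x + y) = h x + h y)
              \<and> (\<forall>x\<in>dperp d. \<forall>y\<in>dperp d. lam_form (h x) (h y) = lam_form x y)}"

definition Oplus_dperp :: "int^12 \<Rightarrow> (int^12 \<Rightarrow> int^12) set" where
  "Oplus_dperp d = {h \<in> O_dperp d. \<exists>M :: complex^12^12.
       (\<forall>x \<in> dperp d. M *v cvec x = cvec (h x))
     \<and> (\<forall>w \<in> Omega_dperp d. connected_component (Omega_dperp d) w (M *v w))}"

end

theory Submission
  imports Defs
begin

(* Write x' = 2x + (x,d)d, twice the orthogonal projection of x to d^perp. An isometry h of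
   d^perp extends to Lambda by g x = (h x' - (x,d)d)/2, which fixes d and restricts to h. The
   division is exact because h v - v lies in 2 Lambda for v = x': for u in d^perp one has
   (u,u) = (u,x') mod 4 when (x,d) is odd, so (u, h v - v) = 0 mod 4, and in Lambda this
   congruence for all u in d^perp forces evenness.
   To see that g preserves the components of Omega_Lambda, join any w in Omega_Lambda by a
   path in Omega_Lambda to some z in Omega_{d^perp}: the complexification of g maps this path
   to one from g w to g z, and g z = h z lies in the component of z because h is in O^+. *)

section \<open>The quadratic form\<close>

lemma lam_form_sym: "lam_form x y = lam_form y x"
  by (simp add: lam_form_def symt_def algebra_simps)

lemma lam_form_add_left: "lam_form (x + y) z = lam_form x z + lam_form y z"
  and lam_form_add_right: "lam_form z (x + y) = lam_form z x + lam_form z y"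
  and lam_form_diff_left: "lam_form (x - y) z = lam_form x z - lam_form y z"
  and lam_form_diff_right: "lam_form z (x - y) = lam_form z x - lam_form z y"
  and lam_form_scale_left: "lam_form (c *s x) z = c * lam_form x z"
  and lam_form_scale_right: "lam_form z (c *s x) = c * lam_form z x"
  by (simp_all add: lam_form_def symt_def algebra_simps)

lemmas lam_form_bilinear =
  lam_form_add_left lam_form_add_right lam_form_diff_left lam_form_diff_right
  lam_form_scale_left lam_form_scale_right

lemma lam_form_zero_left [simp]: "lam_form 0 z = 0"
  and lam_form_zero_right [simp]: "lam_form z 0 = 0"
  by (simp_all add: lam_form_def symt_def)

lemma lam_form_sum_left: "lam_form (sum f A) z = (\<Sum>i\<in>A. lam_form (f i) z)"
  by (induction A rule: infinite_finite_induct) (auto simp: lam_form_add_left)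

lemma lam_form_sum_right: "lam_form z (sum f A) = (\<Sum>i\<in>A. lam_form z (f i))"
  by (induction A rule: infinite_finite_induct) (auto simp: lam_form_add_right)

lemma lam_form_cvec: "lam_form (cvec x) (cvec y) = of_int (lam_form x y)"
  by (simp add: lam_form_def symt_def cvec_def)

lemma lam_form_cconj: "lam_form (cconj x) (cconj y) = cnj (lam_form x y)"
  by (simp add: lam_form_def symt_def cconj_def)

lemma cconj_cconj [simp]: "cconj (cconj x) = x"
  and cconj_cvec [simp]: "cconj (cvec y) = cvec y"
  and cconj_add: "cconj (x + x') = cconj x + cconj x'"
  and cconj_diff: "cconj (x - x') = cconj x - cconj x'"
  and cconj_scale: "cconj (c *s x) = cnj c *s cconj x"
  by (simp_all add: cconj_def cvec_def vec_eq_iff)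

lemma exhaust_12:
  fixes i :: 12
  shows "i = 0 \<or> i = 1 \<or> i = 2 \<or> i = 3 \<or> i = 4 \<or> i = 5 \<or> i = 6 \<or> i = 7 \<or> i = 8 \<or> i = 9
    \<or> i = 10 \<or> i = 11"
proof (induct i)
  case (of_int z)
  then have "z = 0 \<or> z = 1 \<or> z = 2 \<or> z = 3 \<or> z = 4 \<or> z = 5 \<or> z = 6 \<or> z = 7 \<or> z = 8 \<or> z = 9
    \<or> z = 10 \<or> z = 11"
    by (simp; presburger)
  then show ?case by auto
qed

lemma lam_form_axis:
  fixes x :: "int^12"
  shows "lam_form (axis 0 1) x = 2 * x$1"
    "lam_form (axis 1 1) x = 2 * x$0"
    "lam_form (axis 2 1) x = x$3"
    "lam_form (axis 3 1) x = x$2"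
    "lam_form (axis 4 1) x = 2 * (-2 * x$4 + x$6)"
    "lam_form (axis 5 1) x = 2 * (-2 * x$5 + x$7)"
    "lam_form (axis 6 1) x = 2 * (-2 * x$6 + x$4 + x$7)"
    "lam_form (axis 7 1) x = 2 * (-2 * x$7 + x$6 + x$8 + x$5)"
    "lam_form (axis 8 1) x = 2 * (-2 * x$8 + x$7 + x$9)"
    "lam_form (axis 9 1) x = 2 * (-2 * x$9 + x$8 + x$10)"
    "lam_form (axis 10 1) x = 2 * (-2 * x$10 + x$9 + x$11)"
    "lam_form (axis 11 1) x = 2 * (-2 * x$11 + x$10)"
  by (simp_all add: lam_form_def symt_def axis_def algebra_simps)

lemma lam_form_mod_2: "2 dvd lam_form x y - (x$2 * y$3 + x$3 * y$2)"
  for x y :: "int^12"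
  unfolding lam_form_def symt_def
  by (auto intro!: dvd_add dvd_diff dvd_mult dvd_mult2 simp: algebra_simps)

lemma lam_form_self_mod_4: "4 dvd lam_form x x - 2 * (x$2 * x$3)"
  for x :: "int^12"
  unfolding lam_form_def symt_def by (simp add: algebra_simps)

lemma root_coords_odd:
  fixes d :: "int^12"
  assumes "lam_form d d = -2"
  shows "odd (d$2)" "odd (d$3)"
proof -
  have "\<forall>p::int. 4 dvd -2 - 2 * p \<longrightarrow> odd p" by presburger
  moreover have "4 dvd -2 - 2 * (d$2 * d$3)"
    using lam_form_self_mod_4[of d] assms by simp
  ultimately have "odd (d$2 * d$3)" by blast
  then show "odd (d$2)" "odd (d$3)" by auto
qed

section \<open>Extending isometries of \<open>d\<^sup>\<perp>\<close>\<close>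

lemma in_dperp_iff: "x \<in> dperp d \<longleftrightarrow> lam_form x d = 0"
  by (simp add: dperp_def)

lemma dperp_add: "x \<in> dperp d \<Longrightarrow> y \<in> dperp d \<Longrightarrow> x + y \<in> dperp d"
  by (simp add: in_dperp_iff lam_form_add_left)

definition twice_proj :: "int^12 \<Rightarrow> int^12 \<Rightarrow> int^12" where
  "twice_proj d x = 2 *s x + lam_form x d *s d"

lemma twice_proj_in_dperp:
  assumes "lam_form d d = -2"
  shows "twice_proj d x \<in> dperp d"
  using assms by (simp add: twice_proj_def in_dperp_iff lam_form_bilinear)

lemma twice_proj_add: "twice_proj d (x + y) = twice_proj d x + twice_proj d y"
  by (simp add: twice_proj_def lam_form_add_left vec_eq_iff algebra_simps)

lemma twice_proj_dperp: "x \<in> dperp d \<Longrightarrow> twice_proj d x = x + x"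
  by (simp add: twice_proj_def in_dperp_iff vec_eq_iff)

lemma smult_2_cancel:
  fixes x y :: "int^'n"
  shows "2 *s x = 2 *s y \<Longrightarrow> x = y"
  by (simp add: vec_eq_iff)

lemma O_dperpD:
  assumes "h \<in> O_dperp d"
  shows "\<And>x. x \<in> dperp d \<Longrightarrow> h x \<in> dperp d"
    and "\<And>x y. x \<in> dperp d \<Longrightarrow> y \<in> dperp d \<Longrightarrow> h (x + y) = h x + h y"
    and "\<And>x y. x \<in> dperp d \<Longrightarrow> y \<in> dperp d \<Longrightarrow> lam_form (h x) (h y) = lam_form x y"
    and "\<And>y. y \<in> dperp d \<Longrightarrow> \<exists>x \<in> dperp d. h x = y"
  using assms unfolding O_dperp_def bij_betw_def by auto (metis imageE)

lemma O_dperp_zero: "h \<in> O_dperp d \<Longrightarrow> h 0 = 0"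
  using O_dperpD(2)[of h d 0 0] by (simp add: in_dperp_iff)

lemma lam_form_dvd_if_dperp_dvd_4:
  fixes d \<delta> :: "int^12"
  assumes dd: "lam_form d d = -2" and \<delta>: "\<delta> \<in> dperp d"
    and four: "\<And>u. u \<in> dperp d \<Longrightarrow> 4 dvd lam_form u \<delta>"
  shows "2 dvd lam_form x \<delta>"
    and "even (lam_form x d) \<Longrightarrow> 4 dvd lam_form x \<delta>"
proof -
  have d\<delta>: "lam_form d \<delta> = 0"
    using \<delta> by (simp add: in_dperp_iff lam_form_sym)
  have "4 dvd lam_form (twice_proj d x) \<delta>"
    using four twice_proj_in_dperp[OF dd] by blast
  moreover have "lam_form (twice_proj d x) \<delta> = 2 * lam_form x \<delta>"
    by (simp add: twice_proj_def lam_form_bilinear d\<delta>)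
  ultimately show "2 dvd lam_form x \<delta>" by presburger
  assume "even (lam_form x d)"
  define u where "u = x + (lam_form x d div 2) *s d"
  have "u \<in> dperp d"
    using \<open>even (lam_form x d)\<close> dd by (simp add: u_def in_dperp_iff lam_form_bilinear)
  moreover have "lam_form u \<delta> = lam_form x \<delta>"
    by (simp add: u_def lam_form_bilinear d\<delta>)
  ultimately show "4 dvd lam_form x \<delta>" using four by metis
qed

text \<open>This is where the lattice enters: the elements of \<open>d\<^sup>\<perp>\<close> detect \<open>2\<Lambda>\<close> modulo 4.\<close>
lemma even_if_lam_form_dperp_dvd_4:
  fixes d \<delta> :: "int^12"
  assumes dd: "lam_form d d = -2" and \<delta>: "\<delta> \<in> dperp d"
    and four: "\<And>u. u \<in> dperp d \<Longrightarrow> 4 dvd lam_form u \<delta>"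
  shows "even (\<delta>$i)"
proof -
  note two = lam_form_dvd_if_dperp_dvd_4(1)[OF dd \<delta> four]
    and four' = lam_form_dvd_if_dperp_dvd_4(2)[OF dd \<delta> four]
  have "2 dvd \<delta>$3" "2 dvd \<delta>$2"
    using two[of "axis 2 1"] two[of "axis 3 1"] by (simp_all add: lam_form_axis)
  moreover have "4 dvd 2 * \<delta>$1" "4 dvd 2 * \<delta>$0"
    "4 dvd 2 * (-2 * \<delta>$4 + \<delta>$6)"
    "4 dvd 2 * (-2 * \<delta>$5 + \<delta>$7)"
    "4 dvd 2 * (-2 * \<delta>$6 + \<delta>$4 + \<delta>$7)"
    "4 dvd 2 * (-2 * \<delta>$7 + \<delta>$6 + \<delta>$8 + \<delta>$5)"
    "4 dvd 2 * (-2 * \<delta>$8 + \<delta>$7 + \<delta>$9)"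
    "4 dvd 2 * (-2 * \<delta>$9 + \<delta>$8 + \<delta>$10)"
    "4 dvd 2 * (-2 * \<delta>$10 + \<delta>$9 + \<delta>$11)"
    "4 dvd 2 * (-2 * \<delta>$11 + \<delta>$10)"
    using four'[of "axis 0 1"] four'[of "axis 1 1"] four'[of "axis 4 1"] four'[of "axis 5 1"]
      four'[of "axis 6 1"] four'[of "axis 7 1"] four'[of "axis 8 1"] four'[of "axis 9 1"]
      four'[of "axis 10 1"] four'[of "axis 11 1"]
    by (simp_all add: lam_form_axis)
  ultimately have "even (\<delta>$0) \<and> even (\<delta>$1) \<and> even (\<delta>$2) \<and> even (\<delta>$3) \<and> even (\<delta>$4)
    \<and> even (\<delta>$5) \<and> even (\<delta>$6) \<and> even (\<delta>$7) \<and> even (\<delta>$8) \<and> even (\<delta>$9) \<and> even (\<delta>$10)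
    \<and> even (\<delta>$11)"
    by presburger
  then show ?thesis using exhaust_12[of i] by auto
qed

lemma lam_form_dperp_twice_proj_mod_4:
  fixes d x u :: "int^12"
  assumes dd: "lam_form d d = -2" and x: "odd (lam_form x d)" and u: "u \<in> dperp d"
  shows "4 dvd lam_form u u - lam_form u (twice_proj d x)"
proof -
  have "lam_form u (twice_proj d x) = 2 * lam_form u x"
    using u by (simp add: twice_proj_def in_dperp_iff lam_form_bilinear)
  moreover have "even (u$2 * d$3 + u$3 * d$2)" "odd (x$2 * d$3 + x$3 * d$2)"
    using lam_form_mod_2[of u d] lam_form_mod_2[of x d] u x
    by (simp_all add: in_dperp_iff)
  then have "even (u$2 * u$3 - u$2 * x$3 - u$3 * x$2)"
    using root_coords_odd[OF dd] by auto
  ultimately show ?thesis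
    using lam_form_self_mod_4[of u] lam_form_mod_2[of u x] by presburger
qed

text \<open>The componentwise \<open>div 2\<close> is exact, by \<open>even_root_ext_numerator\<close>.\<close>
definition root_ext :: "int^12 \<Rightarrow> (int^12 \<Rightarrow> int^12) \<Rightarrow> int^12 \<Rightarrow> int^12" where
  "root_ext d h x = (\<chi> i. (h (twice_proj d x) - lam_form x d *s d) $ i div 2)"

lemma even_root_ext_numerator:
  fixes d x :: "int^12"
  assumes dd: "lam_form d d = -2" and h: "h \<in> O_dperp d"
  shows "even ((h (twice_proj d x) - lam_form x d *s d) $ i)"
proof (cases "even (lam_form x d)")
  case True
  define w where "w = x + (lam_form x d div 2) *s d"
  have w: "w \<in> dperp d"
    using True dd by (simp add: w_def in_dperp_iff lam_form_bilinear)
  have "twice_proj d x = w + w"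
    using True by (simp add: twice_proj_def w_def vec_eq_iff algebra_simps)
  then have "h (twice_proj d x) = h w + h w"
    using O_dperpD(2)[OF h w w] by simp
  then have "(h (twice_proj d x) - lam_form x d *s d) $ i
      = 2 * ((h w) $ i - (lam_form x d div 2) * d $ i)"
    using True by (simp add: algebra_simps)
  then show ?thesis by simp
next
  case False
  define v where "v = twice_proj d x"
  define \<delta> where "\<delta> = h v - v"
  have v: "v \<in> dperp d"
    unfolding v_def by (rule twice_proj_in_dperp[OF dd])
  then have \<delta>: "\<delta> \<in> dperp d"
    using O_dperpD(1)[OF h] by (simp add: \<delta>_def in_dperp_iff lam_form_diff_left)
  have "4 dvd lam_form u \<delta>" if u: "u \<in> dperp d" for u
  proof -
    obtain u' where u': "u' \<in> dperp d" and hu': "h u' = u"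
      using O_dperpD(4)[OF h u] by blast
    have "lam_form u \<delta> = lam_form u' v - lam_form u v"
      using O_dperpD(3)[OF h u' v] hu' by (simp add: \<delta>_def lam_form_diff_right)
    also have "\<dots> = (lam_form u u - lam_form u v) - (lam_form u' u' - lam_form u' v)"
      using O_dperpD(3)[OF h u' u'] hu' by simp
    finally show ?thesis
      using lam_form_dperp_twice_proj_mod_4[OF dd False] u u' unfolding v_def
      by (metis dvd_diff)
  qed
  then have "even (\<delta>$i)"
    by (rule even_if_lam_form_dperp_dvd_4[OF dd \<delta>])
  moreover have "(h (twice_proj d x) - lam_form x d *s d) $ i = \<delta>$i + 2 * x$i"
    by (simp add: \<delta>_def v_def twice_proj_def)
  ultimately show ?thesis by simp
qed

lemma twice_root_ext:
  assumes "lam_form d d = -2" and "h \<in> O_dperp d"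
  shows "2 *s root_ext d h x = h (twice_proj d x) - lam_form x d *s d"
  using even_root_ext_numerator[OF assms] by (simp add: root_ext_def vec_eq_iff)

lemma root_ext_root:
  assumes dd: "lam_form d d = -2" and h: "h \<in> O_dperp d"
  shows "root_ext d h d = d"
proof -
  have "twice_proj d d = 0"
    using dd by (simp add: twice_proj_def vec_eq_iff)
  then have "h (twice_proj d d) = 0"
    using O_dperp_zero[OF h] by simp
  then have "2 *s root_ext d h d = 2 *s d"
    using twice_root_ext[OF dd h, of d] dd by (simp add: vec_eq_iff)
  then show ?thesis by (rule smult_2_cancel)
qed

lemma root_ext_dperp:
  assumes dd: "lam_form d d = -2" and h: "h \<in> O_dperp d" and x: "x \<in> dperp d"
  shows "root_ext d h x = h x"
proof -
  have "2 *s root_ext d h x = h (x + x)"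
    using twice_root_ext[OF dd h, of x] x by (simp add: twice_proj_dperp in_dperp_iff)
  also have "\<dots> = 2 *s h x"
    using O_dperpD(2)[OF h x x] by (simp add: vec_eq_iff)
  finally show ?thesis by (rule smult_2_cancel)
qed

lemma root_ext_add:
  assumes dd: "lam_form d d = -2" and h: "h \<in> O_dperp d"
  shows "root_ext d h (x + y) = root_ext d h x + root_ext d h y"
proof -
  have "h (twice_proj d (x + y)) = h (twice_proj d x) + h (twice_proj d y)"
    unfolding twice_proj_add
    by (rule O_dperpD(2)[OF h twice_proj_in_dperp[OF dd] twice_proj_in_dperp[OF dd]])
  then have "2 *s root_ext d h (x + y)
      = (h (twice_proj d x) - lam_form x d *s d) + (h (twice_proj d y) - lam_form y d *s d)"
    unfolding twice_root_ext[OF dd h] by (simp add: lam_form_add_left vec_eq_iff algebra_simps)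
  also have "\<dots> = 2 *s (root_ext d h x + root_ext d h y)"
    unfolding twice_root_ext[OF dd h, symmetric] by (simp add: vec_eq_iff distrib_left)
  finally show ?thesis by (rule smult_2_cancel)
qed

lemma root_ext_lam_form:
  assumes dd: "lam_form d d = -2" and h: "h \<in> O_dperp d"
  shows "lam_form (root_ext d h x) (root_ext d h y) = lam_form x y"
proof -
  have hd: "lam_form (h (twice_proj d z)) d = 0" "lam_form d (h (twice_proj d z)) = 0" for z
    using O_dperpD(1)[OF h twice_proj_in_dperp[OF dd]] by (simp_all add: in_dperp_iff lam_form_sym)
  have "lam_form (h (twice_proj d x)) (h (twice_proj d y))
      = lam_form (twice_proj d x) (twice_proj d y)"
    using O_dperpD(3)[OF h twice_proj_in_dperp[OF dd] twice_proj_in_dperp[OF dd]] .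
  also have "\<dots> = 4 * lam_form x y + 2 * lam_form x d * lam_form y d"
    unfolding twice_proj_def lam_form_add_left lam_form_add_right
      lam_form_scale_left lam_form_scale_right dd lam_form_sym[of d y]
    by (simp add: algebra_simps)
  finally have "lam_form (2 *s root_ext d h x) (2 *s root_ext d h y) = 4 * lam_form x y"
    unfolding twice_root_ext[OF dd h] lam_form_diff_left lam_form_diff_right
      lam_form_scale_left lam_form_scale_right hd dd
    by (simp add: algebra_simps)
  then show ?thesis by (simp add: lam_form_scale_left lam_form_scale_right)
qed

lemma additive_int_scale:
  fixes f :: "int^12 \<Rightarrow> int^12"
  assumes "Modules.additive f"
  shows "f (k *s x) = k *s f x"
proof -
  interpret Modules.additive f by fact
  have nat: "f (int n *s x) = int n *s f x" for n
  proof (induction n)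
    case 0
    then show ?case by (simp add: zero vec_eq_iff)
  next
    case (Suc n)
    have "int (Suc n) *s x = int n *s x + x" by (simp add: vec_eq_iff algebra_simps)
    then show ?case using Suc by (simp add: add vec_eq_iff algebra_simps)
  qed
  show ?thesis
  proof (cases "k \<ge> 0")
    case True
    then show ?thesis using nat[of "nat k"] by simp
  next
    case False
    define n where "n = nat (- k)"
    have k: "k = - int n"
      using False by (simp add: n_def)
    have "k *s x = - (int n *s x)"
      unfolding k by (simp add: vec_eq_iff)
    then have "f (k *s x) = - (int n *s f x)"
      by (simp add: minus nat)
    then show ?thesis
      unfolding k by (simp add: vec_eq_iff)
  qed
qed

lemma root_ext_inverse:
  assumes dd: "lam_form d d = -2" and h: "h \<in> O_dperp d" and h': "h' \<in> O_dperp d"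
    and inv: "\<And>u. u \<in> dperp d \<Longrightarrow> h' (h u) = u"
  shows "root_ext d h' (root_ext d h x) = x"
proof -
  let ?F = "\<lambda>x. root_ext d h' (root_ext d h x)"
  have add: "Modules.additive ?F"
    by unfold_locales (simp add: root_ext_add[OF dd h] root_ext_add[OF dd h'])
  have "?F (twice_proj d x) = twice_proj d x"
    using twice_proj_in_dperp[OF dd]
    by (simp add: root_ext_dperp[OF dd h] root_ext_dperp[OF dd h'] O_dperpD(1)[OF h] inv)
  moreover have "?F (twice_proj d x) = 2 *s ?F x + lam_form x d *s d"
    unfolding twice_proj_def additive.add[OF add] additive_int_scale[OF add]
    by (simp add: root_ext_root[OF dd h] root_ext_root[OF dd h'])
  ultimately have "2 *s ?F x = 2 *s x"
    by (simp add: twice_proj_def)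
  then show ?thesis by (rule smult_2_cancel)
qed

lemma O_dperp_inv:
  assumes h: "h \<in> O_dperp d"
  shows "inv_into (dperp d) h \<in> O_dperp d"
    and "\<And>u. u \<in> dperp d \<Longrightarrow> inv_into (dperp d) h (h u) = u"
    and "\<And>u. u \<in> dperp d \<Longrightarrow> h (inv_into (dperp d) h u) = u"
proof -
  let ?L = "dperp d" and ?g = "inv_into (dperp d) h"
  have b: "bij_betw h ?L ?L" using h by (simp add: O_dperp_def)
  have bg: "bij_betw ?g ?L ?L" by (rule bij_betw_inv_into[OF b])
  show inv1: "\<And>u. u \<in> ?L \<Longrightarrow> ?g (h u) = u" using b by (simp add: bij_betw_inv_into_left)
  show inv2: "\<And>u. u \<in> ?L \<Longrightarrow> h (?g u) = u" using b by (simp add: bij_betw_inv_into_right)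
  have gL: "\<And>u. u \<in> ?L \<Longrightarrow> ?g u \<in> ?L" using bg by (simp add: bij_betw_apply)
  have "?g (x + y) = ?g x + ?g y" if "x \<in> ?L" "y \<in> ?L" for x y
  proof -
    have "h (?g x + ?g y) = x + y" using O_dperpD(2)[OF h gL gL] that inv2 by simp
    then show ?thesis using inv1 dperp_add gL that by metis
  qed
  moreover have "lam_form (?g x) (?g y) = lam_form x y" if "x \<in> ?L" "y \<in> ?L" for x y
    using O_dperpD(3)[OF h gL gL] that inv2 by metis
  ultimately show "?g \<in> O_dperp d" using bg by (simp add: O_dperp_def)
qed

lemma root_ext_in_O_Lam:
  assumes dd: "lam_form d d = -2" and h: "h \<in> O_dperp d"
  shows "root_ext d h \<in> O_Lam"
proof -
  let ?h' = "inv_into (dperp d) h"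
  note h' = O_dperp_inv[OF h]
  have "root_ext d ?h' \<circ> root_ext d h = id" "root_ext d h \<circ> root_ext d ?h' = id"
    by (simp_all add: fun_eq_iff root_ext_inverse[OF dd h h'(1,2)] root_ext_inverse[OF dd h'(1) h h'(3)])
  then have "bij (root_ext d h)" by (rule o_bij)
  then show ?thesis by (simp add: O_Lam_def root_ext_add[OF dd h] root_ext_lam_form[OF dd h])
qed

section \<open>Complexification\<close>

lemma O_Lam_additive: "g \<in> O_Lam \<Longrightarrow> Modules.additive g"
  by unfold_locales (simp add: O_Lam_def)

lemma int_vec_axis_expansion: "(x::int^12) = (\<Sum>j\<in>UNIV. x$j *s axis j 1)"
  by (simp add: vec_eq_iff axis_def if_distrib sum.If_cases)

lemma complex_vec_cvec_axis_expansion: "(u::complex^12) = (\<Sum>j\<in>UNIV. u$j *s cvec (axis j 1))"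
  by (simp add: vec_eq_iff axis_def cvec_def if_distrib sum.If_cases)

definition cmatrix :: "(int^12 \<Rightarrow> int^12) \<Rightarrow> complex^12^12" where
  "cmatrix g = (\<chi> i j. of_int (g (axis j 1) $ i))"

lemma cmatrix_cvec:
  assumes "Modules.additive g"
  shows "cmatrix g *v cvec x = cvec (g x)"
proof -
  have "g x = (\<Sum>j\<in>UNIV. x$j *s g (axis j 1))"
    by (subst int_vec_axis_expansion)
      (simp add: additive.sum[OF assms] additive_int_scale[OF assms])
  then have "g x $ i = (\<Sum>j\<in>UNIV. x$j * g (axis j 1) $ i)" for i
    by simp
  then show ?thesis
    by (simp add: vec_eq_iff cmatrix_def matrix_vector_mult_def cvec_def mult.commute)
qed

lemma cconj_cmatrix: "cconj (cmatrix g *v u) = cmatrix g *v cconj u"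
  by (simp add: vec_eq_iff cconj_def matrix_vector_mult_def cmatrix_def)

lemma lam_form_expansion:
  "lam_form (\<Sum>i\<in>UNIV. u$i *s a i) (\<Sum>j\<in>UNIV. v$j *s b j)
     = (\<Sum>i\<in>UNIV. \<Sum>j\<in>UNIV. u$i * v$j * lam_form (a i) (b j))"
  unfolding lam_form_sum_left lam_form_sum_right lam_form_scale_left lam_form_scale_right
    sum_distrib_left
  by (subst sum.swap) (simp add: mult.left_commute mult.assoc)

lemma lam_form_cmatrix:
  assumes "g \<in> O_Lam"
  shows "lam_form (cmatrix g *v u) (cmatrix g *v v) = lam_form u v"
proof -
  have g: "cmatrix g *v u = (\<Sum>j\<in>UNIV. u$j *s cvec (g (axis j 1)))" for u
    by (subst complex_vec_cvec_axis_expansion)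
      (simp add: vec.sum vector_scalar_commute cmatrix_cvec[OF O_Lam_additive[OF assms]])
  have "lam_form (cmatrix g *v u) (cmatrix g *v v)
      = (\<Sum>i\<in>UNIV. \<Sum>j\<in>UNIV. u$i * v$j * lam_form (cvec (axis i 1)) (cvec (axis j 1)))"
    unfolding g lam_form_expansion using assms by (simp add: lam_form_cvec O_Lam_def)
  also have "\<dots> = lam_form u v"
    by (subst (3 4) complex_vec_cvec_axis_expansion, simp only: lam_form_expansion)
  finally show ?thesis .
qed

lemma cmatrix_Omega_Lam: "g \<in> O_Lam \<Longrightarrow> w \<in> Omega_Lam \<Longrightarrow> cmatrix g *v w \<in> Omega_Lam"
  by (simp add: Omega_Lam_def lam_form_cmatrix cconj_cmatrix)

text \<open>For \<open>w\<close> orthogonal to \<open>d\<close>, \<open>2w = (\<Sum>j. w$j *s twice_proj d e\<^sub>j)\<close> is a complex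
  combination of vectors of the lattice \<open>d\<^sup>\<perp>\<close>.\<close>
lemma matrix_eq_on_complex_dperp:
  fixes M M' :: "complex^12^12"
  assumes dd: "lam_form d d = -2"
    and eq: "\<And>x. x \<in> dperp d \<Longrightarrow> M *v cvec x = M' *v cvec x"
    and w: "lam_form w (cvec d) = 0"
  shows "M *v w = M' *v w"
proof -
  define S where "S = (\<Sum>j\<in>UNIV. w$j *s cvec (twice_proj d (axis j 1)))"
  have cv: "cvec (twice_proj d x) = 2 *s cvec x + of_int (lam_form x d) *s cvec d" for x
    by (simp add: vec_eq_iff cvec_def twice_proj_def)
  have wd: "(\<Sum>j\<in>UNIV. w$j * of_int (lam_form (axis j 1) d)) = 0"
  proof -
    have "lam_form w (cvec d) = (\<Sum>j\<in>UNIV. w$j * lam_form (cvec (axis j 1)) (cvec d))"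
      by (subst complex_vec_cvec_axis_expansion) (simp add: lam_form_sum_left lam_form_scale_left)
    then show ?thesis using w by (simp add: lam_form_cvec)
  qed
  have "S $ i = (2 *s w) $ i" for i
  proof -
    have "S $ i = 2 * (\<Sum>j\<in>UNIV. w$j * cvec (axis j 1) $ i)
        + (\<Sum>j\<in>UNIV. w$j * of_int (lam_form (axis j 1) d)) * cvec d $ i"
      unfolding S_def cv
      by (simp add: sum_distrib_left sum_distrib_right sum.distrib algebra_simps)
    also have "(\<Sum>j\<in>UNIV. w$j * cvec (axis j 1) $ i) = w $ i"
      by (subst (2) complex_vec_cvec_axis_expansion) simp
    finally show ?thesis unfolding wd by simp
  qed
  then have "S = 2 *s w" by (simp add: vec_eq_iff)
  moreover have "M *v S = M' *v S"
    unfolding S_def using eq twice_proj_in_dperp[OF dd]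
    by (simp add: vec.sum vector_scalar_commute)
  ultimately have "2 *s (M *v w) = 2 *s (M' *v w)"
    by (simp add: vector_scalar_commute)
  then show ?thesis by (simp add: vec_eq_iff)
qed

section \<open>Paths in the period domain\<close>

lemma continuous_on_lam_form [continuous_intros]:
  fixes f g :: "'a::topological_space \<Rightarrow> complex^12"
  shows "continuous_on S f \<Longrightarrow> continuous_on S g \<Longrightarrow> continuous_on S (\<lambda>s. lam_form (f s) (g s))"
  unfolding lam_form_def symt_def by (intro continuous_intros)

lemma continuous_on_cconj [continuous_intros]:
  fixes f :: "'a::topological_space \<Rightarrow> complex^12"
  shows "continuous_on S f \<Longrightarrow> continuous_on S (\<lambda>s. cconj (f s))"
  unfolding cconj_def by (intro continuous_intros)

lemma continuous_on_vector_scalar_mult [continuous_intros]: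
  fixes f :: "'a::topological_space \<Rightarrow> complex^12" and c :: "'a \<Rightarrow> complex"
  shows "continuous_on S c \<Longrightarrow> continuous_on S f \<Longrightarrow> continuous_on S (\<lambda>s. c s *s f s)"
  unfolding vector_scalar_mult_def by (intro continuous_intros)

definition hform :: "complex^12 \<Rightarrow> real" where
  "hform z = Re (lam_form z (cconj z))"

lemma lam_form_cconj_self: "lam_form w (cconj w) = of_real (hform w)"
proof -
  have "cnj (lam_form w (cconj w)) = lam_form w (cconj w)"
    by (metis cconj_cconj lam_form_cconj lam_form_sym)
  then show ?thesis
    unfolding hform_def by (metis Reals_cnj_iff complex_is_Real_iff of_real_Re)
qed

text \<open>With \<open>A = (z,z)\<close> and the real \<open>B = (z, cconj z)\<close> one has
  \<open>(z - \<kappa> cconj z)\<^sup>2 = A - 2B\<kappa> + cnj A \<kappa>\<^sup>2\<close>; the coefficient below is the smaller root of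
  this quadratic, written so that it is continuous where \<open>|A| < B\<close> and vanishes when \<open>A = 0\<close>.\<close>
definition isotropic_retract_coeff :: "complex^12 \<Rightarrow> complex" where
  "isotropic_retract_coeff z =
     lam_form z z / of_real (hform z + sqrt ((hform z)\<^sup>2 - (cmod (lam_form z z))\<^sup>2))"

definition isotropic_retract :: "complex^12 \<Rightarrow> complex^12" where
  "isotropic_retract z = z - isotropic_retract_coeff z *s cconj z"

lemma smaller_root_eqs:
  fixes A K :: complex and b r :: real
  assumes r2: "r\<^sup>2 = b\<^sup>2 - (cmod A)\<^sup>2" and r: "r > 0" and b: "b > 0"
    and K: "K = A / of_real (b + r)"
  shows "A - 2 * K * of_real b + K * K * cnj A = 0"
    and "of_real b - cnj K * A - K * cnj A + K * cnj K * of_real b = of_real (2 * r\<^sup>2 / (b + r))"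
proof -
  define D where "D = complex_of_real (b + r)"
  have D: "D \<noteq> 0"
    unfolding D_def of_real_eq_0_iff using r b by linarith
  have AA: "A * cnj A = of_real (b\<^sup>2 - r\<^sup>2)"
    using r2 complex_norm_square[of A] by simp
  have KD: "A = K * D" "cnj A = cnj K * D"
    using D K by (simp_all add: D_def)
  have cD: "cnj D = D"
    by (simp add: D_def)
  have "(A - 2 * K * of_real b + K * K * cnj A) * D\<^sup>2
      = A * (D\<^sup>2 - 2 * of_real b * D + A * cnj A)"
    unfolding KD(2) by (simp add: KD(1) algebra_simps power2_eq_square)
  also have "D\<^sup>2 - 2 * of_real b * D + A * cnj A = 0"
    unfolding AA D_def by (simp flip: of_real_mult of_real_power of_real_add of_real_diff)
      (simp add: algebra_simps power2_eq_square)
  finally show "A - 2 * K * of_real b + K * K * cnj A = 0" using D by simp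
  have "(of_real b - cnj K * A - K * cnj A + K * cnj K * of_real b) * D\<^sup>2
      = of_real b * D\<^sup>2 - 2 * (A * cnj A) * D + (A * cnj A) * of_real b"
    unfolding KD by (simp add: cD algebra_simps power2_eq_square)
  also have "\<dots> = of_real (b * (b + r)\<^sup>2 - 2 * (b\<^sup>2 - r\<^sup>2) * (b + r) + (b\<^sup>2 - r\<^sup>2) * b)"
    unfolding AA D_def by simp
  also have "b * (b + r)\<^sup>2 - 2 * (b\<^sup>2 - r\<^sup>2) * (b + r) + (b\<^sup>2 - r\<^sup>2) * b
      = 2 * r\<^sup>2 / (b + r) * (b + r)\<^sup>2"
    using r b by (simp add: field_simps power2_eq_square)
  also have "complex_of_real \<dots> = of_real (2 * r\<^sup>2 / (b + r)) * D\<^sup>2"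
    unfolding D_def by simp
  finally show "of_real b - cnj K * A - K * cnj A + K * cnj K * of_real b
      = of_real (2 * r\<^sup>2 / (b + r))"
    using D by (metis mult_cancel_right power_not_zero)
qed

lemma isotropic_retract_in_Omega_Lam:
  assumes lt: "cmod (lam_form z z) < hform z"
  shows "isotropic_retract z \<in> Omega_Lam"
proof -
  let ?A = "lam_form z z" and ?b = "hform z" and ?K = "isotropic_retract_coeff z"
  define r where "r = sqrt (?b\<^sup>2 - (cmod ?A)\<^sup>2)"
  have b: "?b > 0" using lt by (meson norm_ge_zero le_less_trans)
  have pos: "?b\<^sup>2 - (cmod ?A)\<^sup>2 > 0" using lt b by (simp add: power_strict_mono)
  have r: "r > 0" and r2: "r\<^sup>2 = ?b\<^sup>2 - (cmod ?A)\<^sup>2"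
    using pos by (simp_all add: r_def)
  note eqs = smaller_root_eqs[OF r2 r b isotropic_retract_coeff_def[of z, folded r_def]]
  have "lam_form (isotropic_retract z) (isotropic_retract z) = ?A - 2 * ?K * of_real ?b + ?K * ?K * cnj ?A"
    by (simp add: isotropic_retract_def lam_form_bilinear lam_form_cconj lam_form_cconj_self
        lam_form_sym[of "cconj z"] algebra_simps)
  moreover have "lam_form (isotropic_retract z) (cconj (isotropic_retract z))
      = of_real ?b - cnj ?K * ?A - ?K * cnj ?A + ?K * cnj ?K * of_real ?b"
    by (simp add: isotropic_retract_def cconj_diff cconj_scale lam_form_bilinear lam_form_cconj
        lam_form_cconj_self lam_form_sym[of "cconj z"] algebra_simps)
  ultimately show ?thesis
    using eqs r b by (simp add: Omega_Lam_def)
qed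

lemma isotropic_retract_isotropic: "lam_form z z = 0 \<Longrightarrow> isotropic_retract z = z"
  by (simp add: isotropic_retract_def isotropic_retract_coeff_def vec_eq_iff)

lemma lam_form_isotropic_retract_real:
  assumes "lam_form z v = 0" and "cconj v = v"
  shows "lam_form (isotropic_retract z) v = 0"
proof -
  have "lam_form (cconj z) v = 0"
    using assms lam_form_cconj[of z v] by simp
  then show ?thesis
    using assms(1) by (simp add: isotropic_retract_def lam_form_bilinear)
qed

lemma continuous_on_isotropic_retract:
  fixes f :: "real \<Rightarrow> complex^12"
  assumes f: "continuous_on S f"
    and lt: "\<And>s. s \<in> S \<Longrightarrow> cmod (lam_form (f s) (f s)) < hform (f s)"
  shows "continuous_on S (\<lambda>s. isotropic_retract (f s))"
proof -
  have "hform (f s) + sqrt ((hform (f s))\<^sup>2 - (cmod (lam_form (f s) (f s)))\<^sup>2) \<noteq> 0"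
    if "s \<in> S" for s
  proof -
    have "0 < hform (f s)"
      using lt[OF that] by (meson norm_ge_zero le_less_trans)
    moreover have "(cmod (lam_form (f s) (f s)))\<^sup>2 < (hform (f s))\<^sup>2"
      using lt[OF that] by (simp add: power_strict_mono)
    then have "0 \<le> sqrt ((hform (f s))\<^sup>2 - (cmod (lam_form (f s) (f s)))\<^sup>2)"
      by simp
    ultimately show ?thesis by linarith
  qed
  moreover have "continuous_on S (\<lambda>s. hform (f s))"
    unfolding hform_def by (intro continuous_intros f)
  ultimately show ?thesis
    unfolding isotropic_retract_def isotropic_retract_coeff_def
    by (intro continuous_intros f) (auto simp del: of_real_add)
qed

definition root_slide :: "int^12 \<Rightarrow> complex^12 \<Rightarrow> real \<Rightarrow> complex^12" where
  "root_slide d w s = w + (of_real s * lam_form w (cvec d) / 2) *s cvec d"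

lemma root_slide_orthogonal:
  "lam_form d d = -2 \<Longrightarrow> lam_form (root_slide d w 1) (cvec d) = 0"
  by (simp add: root_slide_def lam_form_bilinear lam_form_cvec)

lemma lam_form_root_slide:
  assumes dd: "lam_form d d = -2" and w: "w \<in> Omega_Lam"
  defines "t \<equiv> lam_form w (cvec d)"
  shows "lam_form (root_slide d w s) (root_slide d w s) = t\<^sup>2 * of_real (s - s\<^sup>2 / 2)"
    and "hform (root_slide d w s) = hform w + (cmod t)\<^sup>2 * (s - s\<^sup>2 / 2)"
proof -
  have ww: "lam_form w w = 0"
    using w by (simp add: Omega_Lam_def)
  have dd': "lam_form (cvec d) (cvec d) = -2"
    using dd by (simp add: lam_form_cvec)
  have dw: "lam_form (cvec d) w = t" and dcw: "lam_form (cvec d) (cconj w) = cnj t"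
    unfolding t_def by (metis lam_form_sym, metis cconj_cvec lam_form_cconj lam_form_sym)
  show "lam_form (root_slide d w s) (root_slide d w s) = t\<^sup>2 * of_real (s - s\<^sup>2 / 2)"
    unfolding root_slide_def using ww dd' dw
    by (simp add: lam_form_bilinear t_def[symmetric] field_simps power2_eq_square)
  have tt: "t * cnj t = of_real ((cmod t)\<^sup>2)"
    by (rule complex_norm_square[symmetric])
  have "lam_form (root_slide d w s) (cconj (root_slide d w s))
      = of_real (hform w) + of_real s * (t * cnj t) - of_real (s\<^sup>2 / 2) * (t * cnj t)"
    unfolding root_slide_def using dd' dw dcw
    by (simp add: cconj_add cconj_scale lam_form_bilinear lam_form_cconj_self t_def[symmetric]
        lam_form_sym[of "cconj w"] field_simps power2_eq_square)
  also have "\<dots> = of_real (hform w + (cmod t)\<^sup>2 * (s - s\<^sup>2 / 2))"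
    unfolding tt by (simp add: algebra_simps)
  finally show "hform (root_slide d w s) = hform w + (cmod t)\<^sup>2 * (s - s\<^sup>2 / 2)"
    by (simp add: hform_def)
qed

lemma root_slide_below_hform:
  assumes dd: "lam_form d d = -2" and w: "w \<in> Omega_Lam" and s: "s \<in> {0..1}"
  shows "cmod (lam_form (root_slide d w s) (root_slide d w s)) < hform (root_slide d w s)"
proof -
  have "s * s \<le> s * 2"
    using s by (intro mult_left_mono) auto
  then have "0 \<le> s - s\<^sup>2 / 2"
    by (simp add: power2_eq_square)
  moreover have "hform w > 0"
    using w by (simp add: Omega_Lam_def hform_def)
  ultimately show ?thesis
    unfolding lam_form_root_slide[OF dd w] norm_mult norm_power norm_of_real by simp
qed

text \<open>Sliding \<open>w\<close> along \<open>d\<close> until it becomes orthogonal to \<open>d\<close> keeps \<open>|(z,z)| < (z, cconj z)\<close>,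
  and the isotropic retraction turns this segment into a path inside \<open>\<Omega>\<close>.\<close>
lemma path_component_Omega_dperp:
  assumes dd: "lam_form d d = -2" and w: "w \<in> Omega_Lam"
  shows "\<exists>z \<in> Omega_dperp d. path_component Omega_Lam w z"
proof -
  define p where "p s = isotropic_retract (root_slide d w s)" for s
  have "continuous_on {0..1} (root_slide d w)"
    unfolding root_slide_def by (intro continuous_intros) auto
  then have "path p"
    unfolding path_def p_def
    by (rule continuous_on_isotropic_retract) (rule root_slide_below_hform[OF dd w])
  moreover have "path_image p \<subseteq> Omega_Lam"
    using root_slide_below_hform[OF dd w] isotropic_retract_in_Omega_Lam
    by (auto simp: path_image_def p_def)
  moreover have "pathstart p = w"
    using w by (simp add: pathstart_def p_def root_slide_def Omega_Lam_def
        isotropic_retract_isotropic)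
  moreover have "pathfinish p \<in> Omega_dperp d"
  proof -
    have "lam_form (p 1) (cvec d) = 0"
      unfolding p_def by (rule lam_form_isotropic_retract_real[OF root_slide_orthogonal[OF dd]]) simp
    moreover have "p 1 \<in> Omega_Lam"
      using \<open>path_image p \<subseteq> Omega_Lam\<close> by (auto simp: path_image_def)
    ultimately show ?thesis by (simp add: pathfinish_def Omega_dperp_def)
  qed
  ultimately show ?thesis
    unfolding path_component_def by blast
qed

lemma path_component_continuous_image:
  assumes "continuous_on S f" and "f ` S \<subseteq> T" and "path_component S x y"
  shows "path_component T (f x) (f y)"
proof -
  obtain p where p: "path p" "path_image p \<subseteq> S" "pathstart p = x" "pathfinish p = y"
    using assms(3) by (auto simp: path_component_def)
  have "path (f \<circ> p)"
    using p(1,2) assms(1) by (meson continuous_on_subset path_continuous_image)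
  moreover have "path_image (f \<circ> p) \<subseteq> T"
    using p(2) assms(2) by (auto simp: path_image_compose)
  ultimately show ?thesis
    using p(3,4) unfolding path_component_def
    by (metis pathfinish_compose pathstart_compose)
qed

lemma path_component_imp_connected_component:
  "path_component S x y \<Longrightarrow> connected_component S x y"
  using path_component_subset_connected_component by blast

lemma Oplus_Lam_if_restriction:
  assumes dd: "lam_form d d = -2" and g: "g \<in> O_Lam" and h: "h \<in> Oplus_dperp d"
    and gh: "\<And>x. x \<in> dperp d \<Longrightarrow> g x = h x"
  shows "g \<in> Oplus_Lam"
proof -
  let ?M = "cmatrix g"
  obtain M' :: "complex^12^12" where
    M': "\<And>x. x \<in> dperp d \<Longrightarrow> M' *v cvec x = cvec (h x)"
    and M'_comp: "\<And>w. w \<in> Omega_dperp d \<Longrightarrow> connected_component (Omega_dperp d) w (M' *v w)"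
    using h unfolding Oplus_dperp_def by blast
  have M: "?M *v cvec x = cvec (g x)" for x
    by (rule cmatrix_cvec[OF O_Lam_additive[OF g]])
  have "connected_component Omega_Lam w (?M *v w)" if w: "w \<in> Omega_Lam" for w
  proof -
    obtain z where z: "z \<in> Omega_dperp d" and wz: "path_component Omega_Lam w z"
      using path_component_Omega_dperp[OF dd w] by blast
    have "?M *v z = M' *v z"
    proof (rule matrix_eq_on_complex_dperp[OF dd])
      show "?M *v cvec x = M' *v cvec x" if "x \<in> dperp d" for x
        using that by (simp add: M M' gh)
      show "lam_form z (cvec d) = 0"
        using z by (simp add: Omega_dperp_def)
    qed
    moreover have "connected_component Omega_Lam z (M' *v z)"
      by (rule connected_component_of_subset[OF M'_comp[OF z]]) (auto simp: Omega_dperp_def)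
    moreover have "path_component Omega_Lam (?M *v w) (?M *v z)"
      by (rule path_component_continuous_image[OF _ _ wz])
        (auto intro: matrix_vector_mult_linear_continuous_on cmatrix_Omega_Lam[OF g])
    ultimately show ?thesis
      using wz by (metis path_component_imp_connected_component connected_component_sym
          connected_component_trans)
  qed
  then show ?thesis
    using g M unfolding Oplus_Lam_def by blast
qed

theorem lemmaA1:
  fixes d :: "int^12"
  assumes "lam_form d d = -2"
  shows "\<forall>h \<in> Oplus_dperp d. \<exists>g \<in> Oplus_Lam. g d = d \<and> (\<forall>x \<in> dperp d. g x = h x)"
proof
  fix h assume h: "h \<in> Oplus_dperp d"
  then have h': "h \<in> O_dperp d"
    by (simp add: Oplus_dperp_def)
  have "root_ext d h \<in> Oplus_Lam"
    using Oplus_Lam_if_restriction[OF assms root_ext_in_O_Lam[OF assms h'] h]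
      root_ext_dperp[OF assms h'] by blast
  then show "\<exists>g \<in> Oplus_Lam. g d = d \<and> (\<forall>x \<in> dperp d. g x = h x)"
    using root_ext_root[OF assms h'] root_ext_dperp[OF assms h'] by blast
qed

end
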